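(* Let $G$ be a finite group and $H$ a normal subgroup of $G$ containing $G'$ such that $|H|$ divides $[G:H]$. Then the square \[ \begin{array}{ccc} G/H & \xrightarrow{\ \widetilde{\operatorname{Ver}}\ } & H/H'\\ \downarrow{\scriptstyle \delta|_H} & & \downarrow{\scriptstyle\delta}\\ \dfrac{I_G/I_G^2}{\delta(H/G')} & \xrightarrow{\ S'\ } & \dfrac{I_H+I_GI_H}{I_GI_H} \end{array} \] commutes.
   Context: $I_G$ is the augmentation ideal of $\mathbb{Z}[G]$ (kernel of $\sum n_\sigma\sigma\mapsto\sum n_\sigma$), similarly $I_H\subseteq I_G$. $\delta\colon G/G'\to I_G/I_G^2$, $\sigma G'\mapsto(\sigma-1)+I_G^2$, and $\delta\colon H/H'\to(I_H+I_GI_H)/I_GI_H$, $hH'\mapsto(h-1)+I_GI_H$, are the canonical isomorphisms. $\delta|_H\colon G/H\to(I_G/I_G^2)/\delta(H/G')$ is the isomorphism induced by $\delta$ via $G/H\cong(G/G')/(H/G')$. With $g_1,\dots,g_n$ coset representatives of $H$ in $G$, $S\colon I_G/I_G^2\to(I_H+I_GI_H)/I_GI_H$ is $S(x)=x\cdot(g_1+\cdots+g_n)\bmod I_GI_H$, and $S'$ is the induced map on $(I_G/I_G^2)/\delta(H/G')$, $S'([x])=S(x)$. The transfer $\operatorname{Ver}(G\to H)\colon G/G'\to H/H'$ is induced by $g\mapsto\prod_i\phi(gg_i)^{-1}gg_i$ where $\phi(g)=g_k$ if $g\in g_kH$; $\widetilde{\operatorname{Ver}}\colon G/H\to H/H'$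 is the map it induces (well defined when $\operatorname{Ver}(G\to H)$ sends $H$ into $H'$). *)

theory Defs
  imports "HOL-Algebra.Solvable_Groups" "HOL-Algebra.Left_Coset" "HOL-Library.Function_Algebras"
begin

text \<open>The integral group ring Z[G] of a finite group G is modelled by functions
  'a => int (coefficients), meant to vanish outside carrier G.\<close>

definition gr_elem :: "'a \<Rightarrow> ('a \<Rightarrow> int)" where
  "gr_elem g = (\<lambda>x. if x = g then 1 else 0)"

definition gr_mult :: "('a, 'b) monoid_scheme \<Rightarrow> ('a \<Rightarrow> int) \<Rightarrow> ('a \<Rightarrow> int) \<Rightarrow> ('a \<Rightarrow> int)" where
  "gr_mult G f1 f2 = (\<lambda>x. \<Sum>a\<in>carrier G. \<Sum>b\<in>carrier G.
      if a \<otimes>\<^bsub>G\<^esub> b = x then f1 a * f2 b else 0)"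

definition aug_ideal :: "'a set \<Rightarrow> ('a \<Rightarrow> int) set" where
  "aug_ideal K = {f. (\<forall>x. x \<notin> K \<longrightarrow> f x = 0) \<and> (\<Sum>x\<in>K. f x) = 0}"

inductive_set prod_ideal :: "('a, 'b) monoid_scheme \<Rightarrow> ('a \<Rightarrow> int) set \<Rightarrow> ('a \<Rightarrow> int) set \<Rightarrow> ('a \<Rightarrow> int) set"
  for G A B where
  zero: "0 \<in> prod_ideal G A B"
| gen: "a \<in> A \<Longrightarrow> b \<in> B \<Longrightarrow> gr_mult G a b \<in> prod_ideal G A B"
| add: "u \<in> prod_ideal G A B \<Longrightarrow> v \<in> prod_ideal G A B \<Longrightarrow> u + v \<in> prod_ideal G A B"
| neg: "u \<in> prod_ideal G A B \<Longrightarrow> - u \<in> prod_ideal G A B"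

definition coset_reps :: "('a, 'b) monoid_scheme \<Rightarrow> 'a set \<Rightarrow> 'a list \<Rightarrow> bool" where
  "coset_reps G H gs \<longleftrightarrow> set gs \<subseteq> carrier G \<and>
     (\<forall>x\<in>carrier G. \<exists>!i. i < length gs \<and> x \<in> (gs ! i) <#\<^bsub>G\<^esub> H)"

definition coset_rep :: "('a, 'b) monoid_scheme \<Rightarrow> 'a set \<Rightarrow> 'a list \<Rightarrow> 'a \<Rightarrow> 'a" where
  "coset_rep G H gs x = (THE r. r \<in> set gs \<and> x \<in> r <#\<^bsub>G\<^esub> H)"

definition ver_rep :: "('a, 'b) monoid_scheme \<Rightarrow> 'a set \<Rightarrow> 'a list \<Rightarrow> 'a \<Rightarrow> 'a" where
  "ver_rep G H gs g = foldr (\<lambda>r acc. (inv\<^bsub>G\<^esub> (coset_rep G H gs (g \<otimes>\<^bsub>G\<^esub> r)) \<otimes>\<^bsub>G\<^esub> (g \<otimes>\<^bsub>G\<^esub> r)) \<otimes>\<^bsub>G\<^esub> acc)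
      gs \<one>\<^bsub>G\<^esub>"

end

theory Submission
  imports Defs
begin

(* Write g g_i = phi(g g_i) h_i with h_i in H. Modulo I_G I_H one has
   x y - 1 == (x - 1) + (y - 1) whenever y is in H, because (x - 1)(y - 1) lies in I_G I_H.
   Hence Ver(g) - 1 = h_1 ... h_n - 1 == sum_i (h_i - 1), and likewise
   g g_i - 1 == (phi(g g_i) - 1) + (h_i - 1). As g_i |-> phi(g g_i) permutes the
   representatives, (g - 1)(g_1 + ... + g_n) = sum_i (g g_i - phi(g g_i)) == sum_i (h_i - 1).
   This congruence holds for every subgroup H; the remaining hypotheses of the theorem
   only make the maps of the square well defined. *)

abbreviation aug_prod_ideal :: "('a, 'b) monoid_scheme \<Rightarrow> 'a set \<Rightarrow> ('a \<Rightarrow> int) set" where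
  "aug_prod_ideal G H \<equiv> prod_ideal G (aug_ideal (carrier G)) (aug_ideal H)"

lemma gr_mult_diff_left: "gr_mult G (f1 - f2) f3 = gr_mult G f1 f3 - gr_mult G f2 f3"
  by (auto simp: gr_mult_def fun_eq_iff sum_subtractf[symmetric] left_diff_distrib intro!: sum.cong)

lemma gr_mult_diff_right: "gr_mult G f3 (f1 - f2) = gr_mult G f3 f1 - gr_mult G f3 f2"
  by (auto simp: gr_mult_def fun_eq_iff sum_subtractf[symmetric] right_diff_distrib intro!: sum.cong)

lemma gr_mult_add_right: "gr_mult G f3 (f1 + f2) = gr_mult G f3 f1 + gr_mult G f3 f2"
  by (auto simp: gr_mult_def fun_eq_iff sum.distrib[symmetric] distrib_left intro!: sum.cong)

lemma gr_mult_zero_right: "gr_mult G f 0 = 0"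
  unfolding gr_mult_def by (rule ext) (simp only: zero_fun_apply mult_zero_right if_cancel sum.neutral_const)

lemma gr_mult_sum_list_right: "gr_mult G f (\<Sum>r\<leftarrow>xs. u r) = (\<Sum>r\<leftarrow>xs. gr_mult G f (u r))"
  by (induction xs) (simp_all only: list.map sum_list.Cons sum_list.Nil gr_mult_add_right gr_mult_zero_right)

lemma gr_mult_gr_elem:
  assumes "finite (carrier G)" "a \<in> carrier G" "b \<in> carrier G"
  shows "gr_mult G (gr_elem a) (gr_elem b) = gr_elem (a \<otimes>\<^bsub>G\<^esub> b)"
proof
  fix x
  have "gr_mult G (gr_elem a) (gr_elem b) x = (\<Sum>a'\<in>carrier G. \<Sum>b'\<in>carrier G.
      if a' = a then if b' = b then gr_elem (a \<otimes>\<^bsub>G\<^esub> b) x else 0 else 0)"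
    unfolding gr_mult_def by (intro sum.cong refl) (auto simp: gr_elem_def)
  also have "\<dots> = (\<Sum>a'\<in>carrier G. if a' = a
      then \<Sum>b'\<in>carrier G. if b' = b then gr_elem (a \<otimes>\<^bsub>G\<^esub> b) x else 0 else 0)"
    by (intro sum.cong refl) simp
  also have "\<dots> = gr_elem (a \<otimes>\<^bsub>G\<^esub> b) x"
    using assms by (simp add: sum.delta)
  finally show "gr_mult G (gr_elem a) (gr_elem b) x = gr_elem (a \<otimes>\<^bsub>G\<^esub> b) x" .
qed

lemma prod_ideal_diff: "u \<in> prod_ideal G A B \<Longrightarrow> v \<in> prod_ideal G A B \<Longrightarrow> u - v \<in> prod_ideal G A B"
  using prod_ideal.add[OF _ prod_ideal.neg] by fastforce

lemma prod_ideal_sum_list: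
  "(\<And>r. r \<in> set xs \<Longrightarrow> u r \<in> prod_ideal G A B) \<Longrightarrow> (\<Sum>r\<leftarrow>xs. u r) \<in> prod_ideal G A B"
  by (induction xs) (auto intro: prod_ideal.intros)

lemma gr_elem_diff_in_aug_ideal:
  "finite K \<Longrightarrow> a \<in> K \<Longrightarrow> b \<in> K \<Longrightarrow> gr_elem a - gr_elem b \<in> aug_ideal K"
  by (auto simp: aug_ideal_def gr_elem_def sum_subtractf)

lemma (in subgroup) foldr_mult_closed:
  "(\<And>r. r \<in> set xs \<Longrightarrow> h r \<in> H) \<Longrightarrow> foldr (\<lambda>r acc. h r \<otimes>\<^bsub>G\<^esub> acc) xs \<one>\<^bsub>G\<^esub> \<in> H"
  by (induction xs) auto

lemma (in group) gr_elem_mult_mod_aug_prod_ideal: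
  assumes "finite (carrier G)" "subgroup H G" "a \<in> carrier G" "b \<in> H"
  shows "(gr_elem (a \<otimes> b) - gr_elem \<one>) - ((gr_elem a - gr_elem \<one>) + (gr_elem b - gr_elem \<one>))
    \<in> aug_prod_ideal G H"
proof -
  have b: "b \<in> carrier G" "finite H"
    using assms subgroup.mem_carrier rev_finite_subset subgroup.subset by metis+
  have "gr_mult G (gr_elem a - gr_elem \<one>) (gr_elem b - gr_elem \<one>) \<in> aug_prod_ideal G H"
    using assms b subgroup.one_closed[OF assms(2)]
    by (intro prod_ideal.gen gr_elem_diff_in_aug_ideal) auto
  moreover have "gr_mult G (gr_elem a - gr_elem \<one>) (gr_elem b - gr_elem \<one>)
      = (gr_elem (a \<otimes> b) - gr_elem \<one>) - ((gr_elem a - gr_elem \<one>) + (gr_elem b - gr_elem \<one>))"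
    using assms b by (simp add: gr_mult_diff_left gr_mult_diff_right gr_mult_gr_elem algebra_simps)
  ultimately show ?thesis by simp
qed

lemma (in group) gr_elem_foldr_mult_mod_aug_prod_ideal:
  assumes "finite (carrier G)" "subgroup H G" "\<And>r. r \<in> set xs \<Longrightarrow> h r \<in> H"
  shows "(gr_elem (foldr (\<lambda>r acc. h r \<otimes> acc) xs \<one>) - gr_elem \<one>)
      - (\<Sum>r\<leftarrow>xs. gr_elem (h r) - gr_elem \<one>) \<in> aug_prod_ideal G H"
  using assms(3)
proof (induction xs)
  case Nil
  show ?case by (simp only: foldr_Nil id_apply list.map sum_list.Nil diff_self diff_zero prod_ideal.zero)
next
  case (Cons x xs)
  define p where "p = foldr (\<lambda>r acc. h r \<otimes> acc) xs \<one>"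
  have "p \<in> H"
    unfolding p_def using Cons.prems by (intro subgroup.foldr_mult_closed[OF assms(2)]) simp
  have hx: "h x \<in> carrier G"
    using Cons.prems by (simp add: subgroup.mem_carrier[OF assms(2)])
  have "(gr_elem p - gr_elem \<one>) - (\<Sum>r\<leftarrow>xs. gr_elem (h r) - gr_elem \<one>) \<in> aug_prod_ideal G H"
    unfolding p_def using Cons.prems by (intro Cons.IH) simp
  with gr_elem_mult_mod_aug_prod_ideal[OF assms(1,2) hx \<open>p \<in> H\<close>]
  have "(gr_elem (h x \<otimes> p) - gr_elem \<one>) - ((gr_elem (h x) - gr_elem \<one>) + (gr_elem p - gr_elem \<one>))
      + ((gr_elem p - gr_elem \<one>) - (\<Sum>r\<leftarrow>xs. gr_elem (h r) - gr_elem \<one>)) \<in> aug_prod_ideal G H"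
    by (rule prod_ideal.add)
  moreover have "(gr_elem (foldr (\<lambda>r acc. h r \<otimes> acc) (x # xs) \<one>) - gr_elem \<one>)
      - (\<Sum>r\<leftarrow>x # xs. gr_elem (h r) - gr_elem \<one>)
    = (gr_elem (h x \<otimes> p) - gr_elem \<one>) - ((gr_elem (h x) - gr_elem \<one>) + (gr_elem p - gr_elem \<one>))
      + ((gr_elem p - gr_elem \<one>) - (\<Sum>r\<leftarrow>xs. gr_elem (h r) - gr_elem \<one>))"
    by (simp add: p_def algebra_simps)
  ultimately show ?case by (simp only:)
qed

context group
begin

lemma coset_reps_unique:
  assumes "coset_reps G H gs" "subgroup H G" "r \<in> set gs" "r' \<in> set gs"
    and "x \<in> r <# H" "x \<in> r' <# H"
  shows "r = r'"
proof -
  obtain i j where "i < length gs" "r = gs ! i" "j < length gs" "r' = gs ! j"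
    using assms(3,4) by (metis in_set_conv_nth)
  moreover have "x \<in> carrier G"
    using assms l_coset_carrier unfolding coset_reps_def by blast
  ultimately show ?thesis using assms(1,5,6) unfolding coset_reps_def by metis
qed

lemma coset_rep_spec:
  assumes "coset_reps G H gs" "subgroup H G" "x \<in> carrier G"
  shows "coset_rep G H gs x \<in> set gs" "x \<in> coset_rep G H gs x <# H"
proof -
  have "\<exists>!r. r \<in> set gs \<and> x \<in> r <# H"
    using assms coset_reps_unique[OF assms(1,2)] unfolding coset_reps_def by (metis nth_mem)
  then have "coset_rep G H gs x \<in> set gs \<and> x \<in> coset_rep G H gs x <# H"
    unfolding coset_rep_def by (rule theI')
  then show "coset_rep G H gs x \<in> set gs" "x \<in> coset_rep G H gs x <# H" by auto
qed

lemma coset_reps_distinct: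
  assumes "coset_reps G H gs" "subgroup H G"
  shows "distinct gs"
  unfolding distinct_conv_nth
proof (intro allI impI)
  fix i j assume ij: "i < length gs" "j < length gs" "i \<noteq> j"
  then have "gs ! i \<in> carrier G" using assms(1) nth_mem unfolding coset_reps_def by blast
  then have "gs ! i \<in> gs ! i <# H" using lcos_self assms(2) by blast
  then show "gs ! i \<noteq> gs ! j" using assms(1) ij \<open>gs ! i \<in> carrier G\<close> unfolding coset_reps_def by metis
qed

lemma inj_on_coset_rep_mult:
  assumes "coset_reps G H gs" "subgroup H G" "g \<in> carrier G"
  shows "inj_on (\<lambda>r. coset_rep G H gs (g \<otimes> r)) (set gs)"
proof
  fix r r' assume r: "r \<in> set gs" "r' \<in> set gs"
    and eq: "coset_rep G H gs (g \<otimes> r) = coset_rep G H gs (g \<otimes> r')"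
  have carr: "r \<in> carrier G" "r' \<in> carrier G" "H \<subseteq> carrier G"
    using r assms(1,2) subgroup.subset unfolding coset_reps_def by auto
  have "(g \<otimes> r) <# H = (g \<otimes> r') <# H"
    using coset_rep_spec[OF assms(1,2)] eq assms carr unfolding coset_reps_def
    by (metis l_repr_independence m_closed subsetD)
  then have "inv g <# ((g \<otimes> r) <# H) = inv g <# ((g \<otimes> r') <# H)" by simp
  then have "r <# H = r' <# H"
    using carr assms(3) by (simp add: lcos_m_assoc m_assoc[symmetric])
  then have "r' \<in> r <# H" using lcos_self carr assms(2) by blast
  then show "r = r'" using coset_reps_unique[OF assms(1,2) r] lcos_self carr assms(2) by blast
qed

lemma sum_list_coset_rep_mult:
  fixes f :: "'a \<Rightarrow> 'c::comm_monoid_add"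
  assumes "coset_reps G H gs" "subgroup H G" "g \<in> carrier G"
  shows "(\<Sum>r\<leftarrow>gs. f (coset_rep G H gs (g \<otimes> r))) = (\<Sum>r\<leftarrow>gs. f r)"
proof -
  have "(\<lambda>r. coset_rep G H gs (g \<otimes> r)) ` set gs = set gs"
    using inj_on_coset_rep_mult[OF assms] coset_rep_spec(1)[OF assms(1,2)] assms
    by (intro endo_inj_surj) (auto simp: coset_reps_def)
  then show ?thesis
    using sum.reindex[OF inj_on_coset_rep_mult[OF assms], of f] coset_reps_distinct[OF assms(1,2)]
    by (simp add: sum_list_distinct_conv_sum_set)
qed

end

definition transfer_factor :: "('a, 'b) monoid_scheme \<Rightarrow> 'a set \<Rightarrow> 'a list \<Rightarrow> 'a \<Rightarrow> 'a \<Rightarrow> 'a" where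
  "transfer_factor G H gs g r = inv\<^bsub>G\<^esub> (coset_rep G H gs (g \<otimes>\<^bsub>G\<^esub> r)) \<otimes>\<^bsub>G\<^esub> (g \<otimes>\<^bsub>G\<^esub> r)"

lemma ver_rep_eq_foldr_transfer_factor:
  "ver_rep G H gs g = foldr (\<lambda>r acc. transfer_factor G H gs g r \<otimes>\<^bsub>G\<^esub> acc) gs \<one>\<^bsub>G\<^esub>"
  by (simp add: ver_rep_def transfer_factor_def)

context group
begin

lemma transfer_factor_in_subgroup:
  assumes "coset_reps G H gs" "subgroup H G" "g \<in> carrier G" "r \<in> carrier G"
  shows "transfer_factor G H gs g r \<in> H"
  using coset_rep_spec[OF assms(1,2), of "g \<otimes> r"] assms subgroup.lcos_module_imp[OF assms(2)]
  unfolding transfer_factor_def coset_reps_def by (meson is_group m_closed subsetD)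

lemma coset_rep_mult_transfer_factor:
  assumes "coset_reps G H gs" "subgroup H G" "g \<in> carrier G" "r \<in> carrier G"
  shows "coset_rep G H gs (g \<otimes> r) \<otimes> transfer_factor G H gs g r = g \<otimes> r"
proof -
  have "coset_rep G H gs (g \<otimes> r) \<in> carrier G"
    using coset_rep_spec(1)[OF assms(1,2)] assms unfolding coset_reps_def by blast
  then show ?thesis using assms unfolding transfer_factor_def by (simp add: m_assoc[symmetric])
qed

lemma ver_rep_mod_aug_prod_ideal:
  assumes "finite (carrier G)" "coset_reps G H gs" "subgroup H G" "g \<in> carrier G"
  shows "(gr_elem (ver_rep G H gs g) - gr_elem \<one>)
      - gr_mult G (gr_elem g - gr_elem \<one>) (\<Sum>r\<leftarrow>gs. gr_elem r) \<in> aug_prod_ideal G H"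
proof -
  define c where "c r = coset_rep G H gs (g \<otimes> r)" for r
  define t where "t r = transfer_factor G H gs g r" for r
  have gs: "set gs \<subseteq> carrier G" using assms(2) unfolding coset_reps_def by simp
  have rep: "c r \<in> carrier G" "c r \<otimes> t r = g \<otimes> r" and factor: "t r \<in> H" if "r \<in> set gs" for r
    using that gs coset_rep_spec(1)[OF assms(2,3)] assms unfolding c_def t_def
    by (auto intro: transfer_factor_in_subgroup coset_rep_mult_transfer_factor)
  have ver: "(gr_elem (ver_rep G H gs g) - gr_elem \<one>) - (\<Sum>r\<leftarrow>gs. gr_elem (t r) - gr_elem \<one>)
      \<in> aug_prod_ideal G H"
    using factor unfolding ver_rep_eq_foldr_transfer_factor t_def
    by (rule gr_elem_foldr_mult_mod_aug_prod_ideal[OF assms(1,3)])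
  have split: "(\<Sum>r\<leftarrow>gs. (gr_elem (g \<otimes> r) - gr_elem \<one>)
      - ((gr_elem (c r) - gr_elem \<one>) + (gr_elem (t r) - gr_elem \<one>))) \<in> aug_prod_ideal G H"
    using rep factor by (intro prod_ideal_sum_list) (metis gr_elem_mult_mod_aug_prod_ideal[OF assms(1,3)])
  have mult: "gr_mult G (gr_elem g - gr_elem \<one>) (\<Sum>r\<leftarrow>gs. gr_elem r) = (\<Sum>r\<leftarrow>gs. gr_elem (g \<otimes> r) - gr_elem r)"
    unfolding gr_mult_sum_list_right using gs assms(1,4)
    by (intro arg_cong[where f=sum_list] map_cong) (auto simp: gr_mult_diff_left gr_mult_gr_elem)
  have perm: "(\<Sum>r\<leftarrow>gs. gr_elem (c r)) = (\<Sum>r\<leftarrow>gs. gr_elem r)"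
    unfolding c_def using assms(2-4) by (rule sum_list_coset_rep_mult)
  have "(gr_elem (ver_rep G H gs g) - gr_elem \<one>) - gr_mult G (gr_elem g - gr_elem \<one>) (\<Sum>r\<leftarrow>gs. gr_elem r)
      = ((gr_elem (ver_rep G H gs g) - gr_elem \<one>) - (\<Sum>r\<leftarrow>gs. gr_elem (t r) - gr_elem \<one>))
      - (\<Sum>r\<leftarrow>gs. (gr_elem (g \<otimes> r) - gr_elem \<one>)
          - ((gr_elem (c r) - gr_elem \<one>) + (gr_elem (t r) - gr_elem \<one>)))"
    unfolding mult using perm by (simp add: sum_list_subtractf sum_list_addf algebra_simps)
  also have "\<dots> \<in> aug_prod_ideal G H"
    by (rule prod_ideal_diff[OF ver split])
  finally show ?thesis .
qed

end

theorem lemma3p7: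
  fixes G :: "('a, 'b) monoid_scheme" and H :: "'a set" and gs :: "'a list"
  assumes "group G" and "finite (carrier G)"
    and "H \<lhd> G"
    and "derived G (carrier G) \<subseteq> H"
    and "card H dvd card (rcosets\<^bsub>G\<^esub> H)"
    and "coset_reps G H gs"
  shows "\<forall>g\<in>carrier G.
     (gr_elem (ver_rep G H gs g) - gr_elem \<one>\<^bsub>G\<^esub>)
       - gr_mult G (gr_elem g - gr_elem \<one>\<^bsub>G\<^esub>) (\<Sum>r\<leftarrow>gs. gr_elem r)
     \<in> prod_ideal G (aug_ideal (carrier G)) (aug_ideal H)"
  using group.ver_rep_mod_aug_prod_ideal[OF assms(1,2,6) normal_imp_subgroup[OF assms(3)]] by blast

end
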